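(* Let $\mathcal{S}=(S,\overline{S})$ be a bisection of minimal potential. Then for all $x\in S$ and $y\in\overline{S}$, $$\mathrm{def}_{\mathcal{S}}(x)+\mathrm{def}_{\mathcal{S}}(y)+2W(x,y)\ge a_x-a_y.$$
   Context: $G$ is a finite simple undirected graph with an odd number $n$ of vertices, each vertex $x$ having stubbornness $\alpha_x\in(0,1)$ and $a_x=\lfloor\alpha_x/(1-\alpha_x)\rfloor$. For vertex sets $A,B$, $W(A,B)$ is the number of edges with one endpoint in $A$ and the other in $B$ (so $W(x,y)=1$ iff $x,y$ are adjacent). A bisection $(S,\overline{S})$ partitions the vertices with $|S|=\frac{n+1}{2}$, $|\overline{S}|=\frac{n-1}{2}$. Deficiency: $\mathrm{def}_{\mathcal{S}}(x)=W(x,S)-W(x,\overline{S})$ for $x\in S$, and $W(x,\overline{S})-W(x,S)$ for $x\in\overline{S}$. Potential: $\Phi(S,\overline{S})=W(S,\overline{S})+\frac12\big(\sum_{x\in S}a_x-\sum_{y\in\overline{S}}a_y\big)$. $\mathcal{S}$ has minimal potential if $\Phi(S,\overline{S})\le\Phi(S\setminus\{x\}\cup\{y\},\overline{S}\setminus\{y\}\cup\{x\})$ for all $x\in S$, $y\in\overline{S}$. *)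

theory Defs
  imports Complex_Main
begin

definition simple_graph :: "'a set \<Rightarrow> ('a \<Rightarrow> 'a \<Rightarrow> bool) \<Rightarrow> bool" where
  "simple_graph V E \<longleftrightarrow> finite V \<and> (\<forall>x y. E x y \<longrightarrow> x \<in> V \<and> y \<in> V)
     \<and> (\<forall>x y. E x y \<longrightarrow> E y x) \<and> (\<forall>x. \<not> E x x)"

definition W :: "('a \<Rightarrow> 'a \<Rightarrow> bool) \<Rightarrow> 'a set \<Rightarrow> 'a set \<Rightarrow> nat" where
  "W E A B = card {e. \<exists>u v. e = {u, v} \<and> E u v \<and> u \<in> A \<and> v \<in> B}"

definition a_of :: "('a \<Rightarrow> real) \<Rightarrow> 'a \<Rightarrow> int" where
  "a_of \<alpha> x = \<lfloor>\<alpha> x / (1 - \<alpha> x)\<rfloor>"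

definition bisection :: "'a set \<Rightarrow> 'a set \<Rightarrow> bool" where
  "bisection V S \<longleftrightarrow> S \<subseteq> V \<and> card S = (card V + 1) div 2 \<and> card (V - S) = (card V - 1) div 2"

definition deficiency :: "'a set \<Rightarrow> ('a \<Rightarrow> 'a \<Rightarrow> bool) \<Rightarrow> 'a set \<Rightarrow> 'a \<Rightarrow> int" where
  "deficiency V E S x =
     (if x \<in> S then int (W E {x} S) - int (W E {x} (V - S))
      else int (W E {x} (V - S)) - int (W E {x} S))"

definition potential :: "'a set \<Rightarrow> ('a \<Rightarrow> 'a \<Rightarrow> bool) \<Rightarrow> ('a \<Rightarrow> real) \<Rightarrow> 'a set \<Rightarrow> real" where
  "potential V E \<alpha> S = real (W E S (V - S))
     + (1/2) * (real_of_int (\<Sum>x\<in>S. a_of \<alpha> x) - real_of_int (\<Sum>y\<in>V - S. a_of \<alpha> y))"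

definition minimal_potential :: "'a set \<Rightarrow> ('a \<Rightarrow> 'a \<Rightarrow> bool) \<Rightarrow> ('a \<Rightarrow> real) \<Rightarrow> 'a set \<Rightarrow> bool" where
  "minimal_potential V E \<alpha> S \<longleftrightarrow>
     (\<forall>x\<in>S. \<forall>y\<in>V - S. potential V E \<alpha> S \<le> potential V E \<alpha> (S - {x} \<union> {y}))"

end

theory Submission
  imports Defs
begin

(* Swapping x and y changes the cut by exactly def(x) + def(y) + 2 W(x,y): the edges from x
   into S - {x} and from y into V - S - {y} enter the cut, those from x into V - S - {y} and
   from y into S - {x} leave it, and the edge xy (if any) stays. The a-term of the potential
   drops by a_x - a_y, so minimality of the potential gives the inequality. *)

definition adj :: "('a \<Rightarrow> 'a \<Rightarrow> bool) \<Rightarrow> 'a \<Rightarrow> 'a \<Rightarrow> int" where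
  "adj E u v = (if E u v then 1 else 0)"

lemma W_singleton_eq_sum:
  assumes "finite B"
  shows "int (W E {x} B) = (\<Sum>v\<in>B. adj E x v)"
proof -
  have "{e. \<exists>u v. e = {u, v} \<and> E u v \<and> u \<in> {x} \<and> v \<in> B} = (\<lambda>v. {x, v}) ` {v\<in>B. E x v}"
    by auto
  moreover have "inj_on (\<lambda>v. {x, v}) {v\<in>B. E x v}"
    by (auto simp: inj_on_def doubleton_eq_iff)
  ultimately have "W E {x} B = card {v\<in>B. E x v}"
    unfolding W_def by (simp add: card_image)
  then show ?thesis
    using assms by (simp add: adj_def sum.If_cases Int_def)
qed

lemma W_eq_double_sum:
  assumes "finite A" "finite B" "A \<inter> B = {}"
  shows "int (W E A B) = (\<Sum>u\<in>A. \<Sum>v\<in>B. adj E u v)"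
proof -
  let ?P = "{p\<in>A \<times> B. E (fst p) (snd p)}"
  have "{e. \<exists>u v. e = {u, v} \<and> E u v \<and> u \<in> A \<and> v \<in> B} = (\<lambda>p. {fst p, snd p}) ` ?P"
    by (auto simp: image_iff) (metis fst_conv snd_conv, blast)
  moreover have "inj_on (\<lambda>p. {fst p, snd p}) ?P"
    using assms(3) by (auto simp: inj_on_def doubleton_eq_iff)
  ultimately have "W E A B = card ?P"
    unfolding W_def by (simp add: card_image)
  also have "int \<dots> = (\<Sum>p\<in>A \<times> B. adj E (fst p) (snd p))"
    using assms by (simp add: adj_def sum.If_cases Int_def)
  also have "\<dots> = (\<Sum>u\<in>A. \<Sum>v\<in>B. adj E u v)"
    by (simp add: sum.cartesian_product case_prod_beta')
  finally show ?thesis .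
qed

lemma W_insert_insert:
  assumes "finite A" "finite B" "A \<inter> B = {}"
    and "x \<notin> A" "x \<notin> B" "y \<notin> A" "y \<notin> B" "x \<noteq> y"
  shows "int (W E (insert x A) (insert y B)) =
    (\<Sum>u\<in>A. \<Sum>v\<in>B. adj E u v) + (\<Sum>u\<in>A. adj E u y) + (\<Sum>v\<in>B. adj E x v) + adj E x y"
  using assms by (simp add: W_eq_double_sum sum.distrib)

lemma simple_graph_adj_commute:
  "simple_graph V E \<Longrightarrow> adj E u v = adj E v u"
  unfolding simple_graph_def adj_def by metis

lemma simple_graph_adj_self:
  "simple_graph V E \<Longrightarrow> adj E u u = 0"
  unfolding simple_graph_def adj_def by simp

lemma cut_swap:
  assumes G: "simple_graph V E" and "S \<subseteq> V" and x: "x \<in> S" and y: "y \<in> V - S"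
  shows "int (W E (S - {x} \<union> {y}) (V - (S - {x} \<union> {y}))) =
    int (W E S (V - S)) + deficiency V E S x + deficiency V E S y + 2 * int (W E {x} {y})"
proof -
  have "finite V" using G by (simp add: simple_graph_def)
  define S0 where "S0 = S - {x}"
  define T0 where "T0 = V - S - {y}"
  have fin: "finite S0" "finite T0"
    using \<open>finite V\<close> \<open>S \<subseteq> V\<close> by (auto simp: S0_def T0_def finite_subset)
  have fresh: "x \<notin> S0" "x \<notin> T0" "y \<notin> S0" "y \<notin> T0" "x \<noteq> y" "S0 \<inter> T0 = {}"
    using x y by (auto simp: S0_def T0_def)
  have S: "S = insert x S0" and T: "V - S = insert y T0"
    using x y by (auto simp: S0_def T0_def)
  have S': "S - {x} \<union> {y} = insert y S0" and T': "V - insert y S0 = insert x T0"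
    using x y \<open>S \<subseteq> V\<close> by (auto simp: S0_def T0_def)
  let ?X = "\<Sum>u\<in>S0. \<Sum>v\<in>T0. adj E u v"
  have cut_old: "int (W E S (V - S)) =
      ?X + (\<Sum>u\<in>S0. adj E y u) + (\<Sum>v\<in>T0. adj E x v) + adj E x y"
    using W_insert_insert[OF fin fresh(6,1,2,3,4,5), of E, folded S T]
    by (simp add: simple_graph_adj_commute[OF G, of _ y])
  have cut_new: "int (W E (S - {x} \<union> {y}) (V - (S - {x} \<union> {y}))) =
      ?X + (\<Sum>u\<in>S0. adj E x u) + (\<Sum>v\<in>T0. adj E y v) + adj E x y"
    using W_insert_insert[OF fin fresh(6,3,4,1,2) fresh(5)[symmetric], of E]
    unfolding S' T' by (simp add: simple_graph_adj_commute[OF G, of _ x])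
  note adj_self = simple_graph_adj_self[OF G]
  have "deficiency V E S x = (\<Sum>u\<in>S0. adj E x u) - (\<Sum>v\<in>T0. adj E x v) - adj E x y"
    using x fin fresh unfolding deficiency_def T by (simp add: S W_singleton_eq_sum adj_self)
  moreover have "deficiency V E S y = (\<Sum>v\<in>T0. adj E y v) - (\<Sum>u\<in>S0. adj E y u) - adj E x y"
    using y fin fresh simple_graph_adj_commute[OF G, of y x]
    unfolding deficiency_def T by (simp add: S W_singleton_eq_sum adj_self)
  moreover have "int (W E {x} {y}) = adj E x y"
    by (simp add: W_singleton_eq_sum)
  ultimately show ?thesis
    unfolding cut_old cut_new by linarith
qed

lemma potential_swap:
  assumes G: "simple_graph V E" and "S \<subseteq> V" and x: "x \<in> S" and y: "y \<in> V - S"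
  shows "potential V E \<alpha> (S - {x} \<union> {y}) = potential V E \<alpha> S
    + (deficiency V E S x + deficiency V E S y + 2 * int (W E {x} {y}))
    - (a_of \<alpha> x - a_of \<alpha> y)"
proof -
  let ?a = "a_of \<alpha>"
  have "finite V" using G by (simp add: simple_graph_def)
  then have fin: "finite S" "finite (V - S)"
    using \<open>S \<subseteq> V\<close> by (auto simp: finite_subset)
  have S': "S - {x} \<union> {y} = insert y (S - {x})"
    and T': "V - (S - {x} \<union> {y}) = insert x (V - S - {y})"
    using x y \<open>S \<subseteq> V\<close> by auto
  have sum_S': "(\<Sum>u\<in>S - {x} \<union> {y}. ?a u) = (\<Sum>u\<in>S. ?a u) - ?a x + ?a y"
    unfolding S' using fin x y by (simp add: sum.remove)
  have sum_T': "(\<Sum>u\<in>V - (S - {x} \<union> {y}). ?a u) = (\<Sum>u\<in>V - S. ?a u) - ?a y + ?a x"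
    unfolding T' using fin x y by (simp add: sum.remove)
  show ?thesis
    using arg_cong[OF cut_swap[OF assms], of real_of_int]
    unfolding potential_def sum_S' sum_T' by (simp del: of_int_sum add: field_simps)
qed

theorem lemma2:
  fixes V :: "'a set" and E :: "'a \<Rightarrow> 'a \<Rightarrow> bool" and \<alpha> :: "'a \<Rightarrow> real" and S :: "'a set"
  assumes "simple_graph V E"
    and "odd (card V)"
    and "\<forall>x\<in>V. 0 < \<alpha> x \<and> \<alpha> x < 1"
    and "bisection V S"
    and "minimal_potential V E \<alpha> S"
    and "x \<in> S" and "y \<in> V - S"
  shows "deficiency V E S x + deficiency V E S y + 2 * int (W E {x} {y}) \<ge> a_of \<alpha> x - a_of \<alpha> y"
proof -
  have "S \<subseteq> V" using \<open>bisection V S\<close> by (simp add: bisection_def)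
  have "potential V E \<alpha> S \<le> potential V E \<alpha> (S - {x} \<union> {y})"
    using \<open>minimal_potential V E \<alpha> S\<close> \<open>x \<in> S\<close> \<open>y \<in> V - S\<close> by (simp add: minimal_potential_def)
  then show ?thesis
    unfolding potential_swap[OF \<open>simple_graph V E\<close> \<open>S \<subseteq> V\<close> \<open>x \<in> S\<close> \<open>y \<in> V - S\<close>] by linarith
qed

end
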